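(* Let $h,g_1,g_2>0$ be reals and for $\Delta>0$ define (logarithms base $2$, $[x]^+=\max\{x,0\}$) $$I_1(\Delta)=\log\Big(1+\frac{h^2}{1+\Delta}+g_2^2\Big),\quad I_2(\Delta)=\log(1+g_1^2+g_2^2)-\log\frac{1+\Delta}{\Delta},\quad R_{\mathrm{QMF}}(\Delta)=[\min\{I_1(\Delta),I_2(\Delta)\}]^+.$$ Then $\Delta^*=\frac{1+h^2+g_2^2}{g_1^2}$ maximizes $R_{\mathrm{QMF}}(\Delta)$ over $\Delta>0$, and it is the solution of $I_1(\Delta)=I_2(\Delta)$.
   Context: $R_{\mathrm{QMF}}(\Delta)$ is the quantize-map-and-forward rate of the full-duplex Gaussian single-relay channel ($Y_r=\mathsf hX+Z_r$, $Y=\mathsf g_1X_r+\mathsf g_2X+Z$, unit powers, unit noise, $h=|\mathsf h|$, $g_i=|\mathsf g_i|$) when the relay uses a Gaussian vector quantizer $\hat Y_r=Y_r+\hat Z_r$, $\hat Z_r\sim\mathcal{CN}(0,\Delta)$; this is the optimal quantizer when the relay knows all channel magnitudes. *)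

theory Defs
  imports Complex_Main
begin

definition qmf_I1 :: "real \<Rightarrow> real \<Rightarrow> real \<Rightarrow> real" where
  "qmf_I1 h g2 \<Delta> = log 2 (1 + h\<^sup>2 / (1 + \<Delta>) + g2\<^sup>2)"

definition qmf_I2 :: "real \<Rightarrow> real \<Rightarrow> real \<Rightarrow> real" where
  "qmf_I2 g1 g2 \<Delta> = log 2 (1 + g1\<^sup>2 + g2\<^sup>2) - log 2 ((1 + \<Delta>) / \<Delta>)"

definition R_QMF :: "real \<Rightarrow> real \<Rightarrow> real \<Rightarrow> real \<Rightarrow> real" where
  "R_QMF h g1 g2 \<Delta> = max (min (qmf_I1 h g2 \<Delta>) (qmf_I2 g1 g2 \<Delta>)) 0"

end

theory Submission
  imports Defs
begin

text \<open>\<open>I\<^sub>1\<close> is decreasing and \<open>I\<^sub>2\<close> is increasing in \<open>\<Delta>\<close>, so \<open>min I\<^sub>1 I\<^sub>2\<close> is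
  largest where the two curves cross; the crossing equation
  \<open>1 + h\<^sup>2/(1+\<Delta>) + g\<^sub>2\<^sup>2 = (1 + g\<^sub>1\<^sup>2 + g\<^sub>2\<^sup>2) \<Delta>/(1+\<Delta>)\<close> is linear in \<open>\<Delta>\<close> after clearing
  denominators and has the unique root \<open>\<Delta>\<^sup>*\<close>.\<close>

lemma min_le_at_crossing:
  fixes f g :: "real \<Rightarrow> real"
  assumes f_antimono: "\<And>a b. 0 < a \<Longrightarrow> a \<le> b \<Longrightarrow> f b \<le> f a"
    and g_mono: "\<And>a b. 0 < a \<Longrightarrow> a \<le> b \<Longrightarrow> g a \<le> g b"
    and cross: "f c = g c" and "c > 0" and "d > 0"
  shows "min (f d) (g d) \<le> f c"
proof (cases "d \<le> c")
  case True
  then have "g d \<le> g c" using g_mono \<open>d > 0\<close> by blast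
  then show ?thesis using cross by linarith
next
  case False
  then have "f d \<le> f c" using f_antimono \<open>c > 0\<close> by force
  then show ?thesis by linarith
qed

lemma qmf_I2_eq_log:
  assumes "\<Delta> > 0"
  shows "qmf_I2 g1 g2 \<Delta> = log 2 ((1 + g1\<^sup>2 + g2\<^sup>2) * \<Delta> / (1 + \<Delta>))"
proof -
  have "(1 + g1\<^sup>2 + g2\<^sup>2) / ((1 + \<Delta>) / \<Delta>) = (1 + g1\<^sup>2 + g2\<^sup>2) * \<Delta> / (1 + \<Delta>)"
    using assms by (simp add: field_simps)
  moreover have "log 2 ((1 + g1\<^sup>2 + g2\<^sup>2) / ((1 + \<Delta>) / \<Delta>))
      = log 2 (1 + g1\<^sup>2 + g2\<^sup>2) - log 2 ((1 + \<Delta>) / \<Delta>)"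
    using assms by (intro log_divide_pos) (simp_all add: add_pos_nonneg)
  ultimately show ?thesis unfolding qmf_I2_def by simp
qed

lemma qmf_I1_antimono:
  assumes "0 < a" "a \<le> b"
  shows "qmf_I1 h g2 b \<le> qmf_I1 h g2 a"
proof -
  have "h\<^sup>2 / (1 + b) \<le> h\<^sup>2 / (1 + a)" using assms by (intro divide_left_mono) auto
  moreover have "0 < 1 + h\<^sup>2 / (1 + b) + g2\<^sup>2" using assms by (simp add: add_pos_nonneg)
  ultimately show ?thesis unfolding qmf_I1_def by simp
qed

lemma qmf_I2_mono:
  assumes "0 < a" "a \<le> b"
  shows "qmf_I2 g1 g2 a \<le> qmf_I2 g1 g2 b"
proof -
  have c: "1 + g1\<^sup>2 + g2\<^sup>2 > 0" by (simp add: add_pos_nonneg)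
  have "a / (1 + a) \<le> b / (1 + b)" using assms by (simp add: field_simps)
  then have "(1 + g1\<^sup>2 + g2\<^sup>2) * a / (1 + a) \<le> (1 + g1\<^sup>2 + g2\<^sup>2) * b / (1 + b)"
    using c by (simp add: mult_left_mono times_divide_eq_right[symmetric] del: times_divide_eq_right)
  moreover have "0 < (1 + g1\<^sup>2 + g2\<^sup>2) * a / (1 + a)" using c assms by simp
  ultimately show ?thesis using assms by (simp add: qmf_I2_eq_log)
qed

lemma qmf_I1_eq_I2_iff:
  assumes "\<Delta> > 0" "g1 > 0"
  shows "qmf_I1 h g2 \<Delta> = qmf_I2 g1 g2 \<Delta> \<longleftrightarrow> \<Delta> = (1 + h\<^sup>2 + g2\<^sup>2) / g1\<^sup>2"
proof -
  have pos1: "0 < 1 + h\<^sup>2 / (1 + \<Delta>) + g2\<^sup>2" using assms by (simp add: add_pos_nonneg)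
  have pos2: "0 < (1 + g1\<^sup>2 + g2\<^sup>2) * \<Delta> / (1 + \<Delta>)" using assms by (simp add: add_pos_nonneg)
  have "qmf_I1 h g2 \<Delta> = qmf_I2 g1 g2 \<Delta>
      \<longleftrightarrow> 1 + h\<^sup>2 / (1 + \<Delta>) + g2\<^sup>2 = (1 + g1\<^sup>2 + g2\<^sup>2) * \<Delta> / (1 + \<Delta>)"
    unfolding qmf_I1_def qmf_I2_eq_log[OF assms(1)] using pos1 pos2 by (simp add: inj_on_eq_iff[OF log_inj])
  also have "\<dots> \<longleftrightarrow> (1 + \<Delta>) + h\<^sup>2 + g2\<^sup>2 * (1 + \<Delta>) = (1 + g1\<^sup>2 + g2\<^sup>2) * \<Delta>"
    using assms by (simp add: field_simps)
  also have "\<dots> \<longleftrightarrow> g1\<^sup>2 * \<Delta> = 1 + h\<^sup>2 + g2\<^sup>2"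
    by (auto simp: algebra_simps)
  also have "\<dots> \<longleftrightarrow> \<Delta> = (1 + h\<^sup>2 + g2\<^sup>2) / g1\<^sup>2"
    using assms by (auto simp: field_simps)
  finally show ?thesis .
qed

theorem mainTheorem8:
  fixes h g1 g2 :: real
  assumes "h > 0" and "g1 > 0" and "g2 > 0"
  defines "\<Delta>s \<equiv> (1 + h\<^sup>2 + g2\<^sup>2) / g1\<^sup>2"
  shows "\<Delta>s > 0
    \<and> (\<forall>\<Delta>>0. R_QMF h g1 g2 \<Delta> \<le> R_QMF h g1 g2 \<Delta>s)
    \<and> qmf_I1 h g2 \<Delta>s = qmf_I2 g1 g2 \<Delta>s
    \<and> (\<forall>\<Delta>>0. qmf_I1 h g2 \<Delta> = qmf_I2 g1 g2 \<Delta> \<longrightarrow> \<Delta> = \<Delta>s)"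
proof -
  have pos: "\<Delta>s > 0" unfolding \<Delta>s_def using assms by (simp add: add_pos_nonneg)
  have cross: "qmf_I1 h g2 \<Delta>s = qmf_I2 g1 g2 \<Delta>s"
    using qmf_I1_eq_I2_iff[OF pos \<open>g1 > 0\<close>] \<Delta>s_def by simp
  have "R_QMF h g1 g2 \<Delta> \<le> R_QMF h g1 g2 \<Delta>s" if "\<Delta> > 0" for \<Delta>
    using min_le_at_crossing[of "qmf_I1 h g2" "qmf_I2 g1 g2", OF qmf_I1_antimono qmf_I2_mono cross pos that] cross
    unfolding R_QMF_def by simp
  moreover have "\<forall>\<Delta>>0. qmf_I1 h g2 \<Delta> = qmf_I2 g1 g2 \<Delta> \<longrightarrow> \<Delta> = \<Delta>s"
    using qmf_I1_eq_I2_iff \<open>g1 > 0\<close> \<Delta>s_def by blast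
  ultimately show ?thesis using pos cross by blast
qed

end
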